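(* Let $v$ be a nonzero vector of $\mathbb{F}_4^n$ and, for $1\le k\le n-1$, let $\tau_k$ be the number of self-orthogonal additive codes $C$ over $\mathbb{F}_4$ of length $n$ and dimension $k$ such that $v\in C^\perp\setminus C$. Then \[ \tau_k=2^k\prod_{i=1}^{k}\frac{2^{2(n-i)}-1}{2^i-1}; \] in particular $\tau_k$ does not depend on $v$.
   Context: $\mathbb{F}_4=\{0,1,\omega,\omega^2\}$ with $\omega^2=\omega+1$, $\bar x:=x^2$. Trace inner product $\langle u,v\rangle=\sum_{i}(u_i\bar v_i+\bar u_i v_i)\in\mathbb{F}_2$ on $\mathbb{F}_4^n$. An additive code of length $n$ is an $\mathbb{F}_2$-subspace of $\mathbb{F}_4^n$, with dimension meaning $\mathbb{F}_2$-dimension; $C^\perp$ is its dual under the trace inner product, and $C$ is self-orthogonal if $C\subseteq C^\perp$. *)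

theory Defs
  imports Complex_Main "HOL-Library.Function_Algebras"
begin

text \<open>The field F4 = {0, 1, w, w^2} with w^2 = w + 1.
  Additively F4 = F2^2 with 1 ~ (1,0), w ~ (0,1), w^2 ~ (1,1).\<close>

datatype f4 = Zero4 | One4 | W4 | Wsq4

fun f4_add :: "f4 \<Rightarrow> f4 \<Rightarrow> f4" where
  "f4_add Zero4 y = y"
| "f4_add x Zero4 = x"
| "f4_add One4 One4 = Zero4" | "f4_add One4 W4 = Wsq4" | "f4_add One4 Wsq4 = W4"
| "f4_add W4 One4 = Wsq4" | "f4_add W4 W4 = Zero4" | "f4_add W4 Wsq4 = One4"
| "f4_add Wsq4 One4 = W4" | "f4_add Wsq4 W4 = One4" | "f4_add Wsq4 Wsq4 = Zero4"

fun f4_mult :: "f4 \<Rightarrow> f4 \<Rightarrow> f4" where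
  "f4_mult Zero4 y = Zero4"
| "f4_mult x Zero4 = Zero4"
| "f4_mult One4 y = y"
| "f4_mult x One4 = x"
| "f4_mult W4 W4 = Wsq4" | "f4_mult W4 Wsq4 = One4"
| "f4_mult Wsq4 W4 = One4" | "f4_mult Wsq4 Wsq4 = W4"

definition f4_conj :: "f4 \<Rightarrow> f4" where
  "f4_conj x = f4_mult x x"

instantiation f4 :: ab_group_add
begin
definition zero_f4_def: "0 = Zero4"
definition plus_f4_def: "x + y = f4_add x y"
definition uminus_f4_def: "- (x::f4) = x"
definition minus_f4_def: "x - y = f4_add x (y::f4)"
instance
proof
  fix a b c :: f4
  show "a + b + c = a + (b + c)" unfolding plus_f4_def
    by (cases a; cases b; cases c) auto
  show "a + b = b + a" unfolding plus_f4_def by (cases a; cases b) auto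
  show "0 + a = a" unfolding plus_f4_def zero_f4_def by (cases a) auto
  show "- a + a = 0" unfolding plus_f4_def zero_f4_def uminus_f4_def by (cases a) auto
  show "a - b = a + - b" unfolding plus_f4_def minus_f4_def uminus_f4_def by simp
qed
end

definition vecs :: "nat \<Rightarrow> (nat \<Rightarrow> f4) set" where
  "vecs n = {x. \<forall>i\<ge>n. x i = 0}"

text \<open>Trace inner product <u,v> = sum_i (u_i bar v_i + bar u_i v_i), valued in F2 = {0,1} inside F4.\<close>
definition tr_ip :: "nat \<Rightarrow> (nat \<Rightarrow> f4) \<Rightarrow> (nat \<Rightarrow> f4) \<Rightarrow> f4" where
  "tr_ip n u v = (\<Sum>i<n. f4_mult (u i) (f4_conj (v i)) + f4_mult (f4_conj (u i)) (v i))"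

text \<open>Additive code of length n: an F2-subspace of F4^n (scalars F2, so closure under + and 0).\<close>
definition additive_code :: "nat \<Rightarrow> (nat \<Rightarrow> f4) set \<Rightarrow> bool" where
  "additive_code n C \<longleftrightarrow> C \<subseteq> vecs n \<and> 0 \<in> C \<and> (\<forall>x\<in>C. \<forall>y\<in>C. x + y \<in> C)"

definition dual_code :: "nat \<Rightarrow> (nat \<Rightarrow> f4) set \<Rightarrow> (nat \<Rightarrow> f4) set" where
  "dual_code n C = {u \<in> vecs n. \<forall>c\<in>C. tr_ip n u c = 0}"

definition self_orthogonal :: "nat \<Rightarrow> (nat \<Rightarrow> f4) set \<Rightarrow> bool" where
  "self_orthogonal n C \<longleftrightarrow> C \<subseteq> dual_code n C"

text \<open>F2-dimension k: C has an F2-basis of k elements (linearly independent over F2,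
  i.e. no nonempty subset sums to 0; and C is the F2-span, i.e. the set of subset sums).\<close>
definition f2_dim :: "(nat \<Rightarrow> f4) set \<Rightarrow> nat \<Rightarrow> bool" where
  "f2_dim C k \<longleftrightarrow> (\<exists>B. finite B \<and> card B = k \<and> B \<subseteq> C \<and>
      (\<forall>T\<subseteq>B. sum id T = 0 \<longrightarrow> T = {}) \<and> C = (\<lambda>T. sum id T) ` Pow B)"

end

(* Double counting of ordered bases.  Call a list x_1, ..., x_k admissible if v, x_1, ..., x_k
   are F2-independent and pairwise orthogonal.  Such lists are built one element at a time: if S
   is the span of v and the elements chosen so far, j of them, then |S| = 2^(j+1), and since the
   trace form is nondegenerate |S^perp| |S| = 4^n, so the next element ranges over the
   2^(2n-j-1) - 2^(j+1) elements of S^perp - S.  The span of an admissible list of length k is a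
   code counted by tau_k, and conversely every ordered basis of such a code is admissible, so each
   of these codes arises from exactly (2^k - 1)(2^k - 2)...(2^k - 2^(k-1)) lists. *)

theory Submission
  imports Defs
begin

section \<open>Elementary abelian 2-groups\<close>

class ab_group_add_char2 = ab_group_add +
  assumes add_self [simp]: "x + x = 0"

instance f4 :: ab_group_add_char2
proof
  fix x :: f4
  show "x + x = 0" unfolding plus_f4_def zero_f4_def by (cases x) auto
qed

instance "fun" :: (type, ab_group_add_char2) ab_group_add_char2
  by standard (simp add: fun_eq_iff)

lemma add_self_cancel [simp]: "x + y + y = (x :: 'a :: ab_group_add_char2)"
  by (simp add: add.assoc)

definition add_closed :: "'a :: ab_group_add set \<Rightarrow> bool" where
  "add_closed A \<longleftrightarrow> 0 \<in> A \<and> (\<forall>x\<in>A. \<forall>y\<in>A. x + y \<in> A)"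

definition f2_span :: "'a :: ab_group_add_char2 set \<Rightarrow> 'a set" where
  "f2_span X = (\<lambda>T. sum id T) ` Pow X"

lemma sum_mem_add_closed:
  assumes "add_closed A" "T \<subseteq> A"
  shows "sum id T \<in> A"
proof (cases "finite T")
  case True
  from this assms(2) show ?thesis
    by (induction T rule: finite_induct) (use assms(1) in \<open>auto simp: add_closed_def\<close>)
next
  case False
  then show ?thesis using assms(1) by (simp add: add_closed_def)
qed

lemma f2_span_subset: "X \<subseteq> A \<Longrightarrow> add_closed A \<Longrightarrow> f2_span X \<subseteq> A"
  unfolding f2_span_def using sum_mem_add_closed by blast

lemma f2_span_mono: "X \<subseteq> Y \<Longrightarrow> f2_span X \<subseteq> f2_span Y"
  unfolding f2_span_def by auto

lemma f2_span_superset: "X \<subseteq> f2_span X"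
  unfolding f2_span_def by (force intro: image_eqI[where x = "{_}"])

lemma f2_span_empty [simp]: "f2_span {} = {0}"
  unfolding f2_span_def by simp

lemma finite_f2_span: "finite X \<Longrightarrow> finite (f2_span X)"
  unfolding f2_span_def by simp

lemma sum_symdiff:
  fixes A B :: "'a :: ab_group_add_char2 set"
  assumes "finite A" "finite B"
  shows "sum id A + sum id B = sum id ((A - B) \<union> (B - A))"
proof -
  have "sum id A = sum id (A - B) + sum id (A \<inter> B)"
    using assms by (metis add.commute sum.Int_Diff)
  moreover have "sum id B = sum id (B - A) + sum id (A \<inter> B)"
    using assms by (metis add.commute inf_commute sum.Int_Diff)
  moreover have "sum id ((A - B) \<union> (B - A)) = sum id (A - B) + sum id (B - A)"
    using assms by (intro sum.union_disjoint) auto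
  ultimately show ?thesis by (simp add: algebra_simps)
qed

lemma add_closed_f2_span:
  assumes "finite X"
  shows "add_closed (f2_span X)"
  unfolding add_closed_def
proof (intro conjI ballI)
  show "0 \<in> f2_span X" by (auto simp: f2_span_def intro: image_eqI[where x = "{}"])
next
  fix x y assume "x \<in> f2_span X" "y \<in> f2_span X"
  then obtain A B where "A \<subseteq> X" "B \<subseteq> X" "x = sum id A" "y = sum id B"
    unfolding f2_span_def by auto
  moreover from this have "x + y = sum id ((A - B) \<union> (B - A))"
    using assms sum_symdiff[of A B] by (metis finite_subset)
  ultimately show "x + y \<in> f2_span X" unfolding f2_span_def by blast
qed

lemma f2_span_insert:
  assumes "finite X"
  shows "f2_span (insert x X) = f2_span X \<union> (\<lambda>y. x + y) ` f2_span X"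
proof
  show "f2_span (insert x X) \<subseteq> f2_span X \<union> (\<lambda>y. x + y) ` f2_span X"
  proof
    fix z assume "z \<in> f2_span (insert x X)"
    then obtain T where T: "T \<subseteq> insert x X" "z = sum id T" unfolding f2_span_def by auto
    show "z \<in> f2_span X \<union> (\<lambda>y. x + y) ` f2_span X"
    proof (cases "x \<in> T")
      case True
      have "finite T" using T(1) assms finite_subset by blast
      then have "z = x + sum id (T - {x})" using T(2) True by (metis id_apply sum.remove)
      moreover have "T - {x} \<subseteq> X" using T(1) by auto
      ultimately show ?thesis unfolding f2_span_def by blast
    next
      case False
      then show ?thesis using T unfolding f2_span_def by blast
    qed
  qed
next
  have "f2_span X \<subseteq> f2_span (insert x X)" by (rule f2_span_mono) auto
  moreover have "x \<in> f2_span (insert x X)" using f2_span_superset by blast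
  moreover have "add_closed (f2_span (insert x X))" using assms by (simp add: add_closed_f2_span)
  ultimately show "f2_span X \<union> (\<lambda>y. x + y) ` f2_span X \<subseteq> f2_span (insert x X)"
    unfolding add_closed_def by blast
qed

lemma card_f2_span_insert:
  assumes "finite X" "x \<notin> f2_span X"
  shows "card (f2_span (insert x X)) = 2 * card (f2_span X)"
proof -
  have "f2_span X \<inter> (\<lambda>y. x + y) ` f2_span X = {}"
  proof (rule ccontr)
    assume "f2_span X \<inter> (\<lambda>y. x + y) ` f2_span X \<noteq> {}"
    then obtain y where "y \<in> f2_span X" "x + y \<in> f2_span X" by auto
    then have "x + y + y \<in> f2_span X"
      using add_closed_f2_span[OF assms(1)] unfolding add_closed_def by blast
    then show False using assms(2) by simp
  qed
  moreover have "inj_on (\<lambda>y. x + y) (f2_span X)" by (rule inj_onI) simp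
  ultimately show ?thesis
    using assms(1) by (simp add: f2_span_insert card_Un_disjoint finite_f2_span card_image)
qed

lemma in_f2_span_insert:
  assumes "finite X" "a \<in> f2_span (insert b X)" "a \<notin> f2_span X"
  shows "b \<in> f2_span (insert a X)"
proof -
  obtain y where y: "y \<in> f2_span X" "a = b + y"
    using assms by (auto simp: f2_span_insert)
  then have "b = a + y" by simp
  then show ?thesis using y(1) assms(1) f2_span_insert[of X a] by auto
qed

fun stepwise :: "('a list \<Rightarrow> 'a \<Rightarrow> bool) \<Rightarrow> 'a list \<Rightarrow> bool" where
  "stepwise Q [] = True"
| "stepwise Q (x # xs) \<longleftrightarrow> stepwise Q xs \<and> Q xs x"

lemma card_stepwise_lists:
  assumes "\<And>ys. length ys < k \<Longrightarrow> stepwise Q ys \<Longrightarrow>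
      finite {x. Q ys x} \<and> card {x. Q ys x} = f (length ys)"
  shows "finite {xs. length xs = k \<and> stepwise Q xs} \<and>
    card {xs. length xs = k \<and> stepwise Q xs} = (\<Prod>j<k. f j)"
  using assms
proof (induction k)
  case 0
  have "{xs. length xs = 0 \<and> stepwise Q xs} = {[]}" by auto
  then show ?case by simp
next
  case (Suc k)
  let ?L = "{xs. length xs = k \<and> stepwise Q xs}"
  let ?E = "SIGMA ys:?L. {x. Q ys x}"
  have IH: "finite ?L \<and> card ?L = (\<Prod>j<k. f j)"
    using Suc.prems by (intro Suc.IH) simp
  have ext: "finite {x. Q ys x} \<and> card {x. Q ys x} = f k" if "ys \<in> ?L" for ys
    using Suc.prems that by auto
  have "{xs. length xs = Suc k \<and> stepwise Q xs} = (\<lambda>(ys, x). x # ys) ` ?E"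
    by (auto simp: length_Suc_conv)
  moreover have "inj_on (\<lambda>(ys, x). x # ys) ?E" by (rule inj_onI) auto
  moreover have "finite ?E" using IH ext by (intro finite_SigmaI) auto
  moreover have "card ?E = card ?L * f k" using IH ext by (subst card_SigmaI) auto
  ultimately show ?case using IH ext by (simp add: card_image)
qed

definition f2_independent :: "'a :: ab_group_add_char2 list \<Rightarrow> bool" where
  "f2_independent = stepwise (\<lambda>ys x. x \<notin> f2_span (set ys))"

lemma f2_independent_simps [simp]:
  "f2_independent []"
  "f2_independent (x # xs) \<longleftrightarrow> f2_independent xs \<and> x \<notin> f2_span (set xs)"
  by (simp_all add: f2_independent_def)

lemma f2_independent_Cons_swap:
  "f2_independent (x # y # xs) \<longleftrightarrow> f2_independent (y # x # xs)"
  using f2_span_mono[of "set xs" "insert _ (set xs)"] in_f2_span_insert[of "set xs"]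
  by auto

lemma f2_independent_distinct: "f2_independent xs \<Longrightarrow> distinct xs"
  by (induction xs) (use f2_span_superset in auto)

lemma card_f2_span_independent:
  "f2_independent xs \<Longrightarrow> card (f2_span (set xs)) = 2 ^ length xs"
  by (induction xs) (simp_all add: card_f2_span_insert)

lemma f2_dim_f2_span:
  assumes "f2_independent xs"
  shows "f2_dim (f2_span (set xs)) (length xs)"
proof -
  let ?B = "set xs"
  have "card ?B = length xs"
    using assms by (simp add: f2_independent_distinct distinct_card)
  moreover from this have "inj_on (\<lambda>T. sum id T) (Pow ?B)"
    using card_f2_span_independent[OF assms]
    by (simp add: f2_span_def inj_on_iff_eq_card card_Pow)
  then have "\<forall>T\<subseteq>?B. sum id T = 0 \<longrightarrow> T = {}"
    by (metis Pow_bottom Pow_iff inj_on_contraD sum.empty)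
  ultimately show ?thesis
    unfolding f2_dim_def using f2_span_superset by (intro exI[of _ ?B]) (auto simp: f2_span_def)
qed

lemma card_f2_dim:
  assumes "f2_dim C k"
  shows "finite C" "card C = 2 ^ k"
proof -
  obtain B where B: "finite B" "card B = k" "\<forall>T\<subseteq>B. sum id T = 0 \<longrightarrow> T = {}"
    "C = (\<lambda>T. sum id T) ` Pow B"
    using assms unfolding f2_dim_def by blast
  have "inj_on (\<lambda>T. sum id T) (Pow B)"
  proof (rule inj_onI)
    fix T U assume TU: "T \<in> Pow B" "U \<in> Pow B" "sum id T = sum id U"
    have "finite T" "finite U" using TU(1,2) B(1) finite_subset by auto
    then have "sum id ((T - U) \<union> (U - T)) = sum id U + sum id U"
      using TU(3) sum_symdiff[of T U] by simp
    moreover have "(T - U) \<union> (U - T) \<subseteq> B" using TU(1,2) by auto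
    ultimately have "(T - U) \<union> (U - T) = {}" using B(3) by (simp only: add_self)
    then show "T = U" by auto
  qed
  then show "finite C" "card C = 2 ^ k" using B(1,2,4) by (simp_all add: card_image card_Pow)
qed

lemma card_ordered_f2_bases:
  assumes "finite C" "add_closed C"
  shows "finite {xs. length xs = k \<and> f2_independent xs \<and> set xs \<subseteq> C}"
    "card {xs. length xs = k \<and> f2_independent xs \<and> set xs \<subseteq> C} = (\<Prod>j<k. card C - 2 ^ j)"
proof -
  define Q where "Q ys x \<longleftrightarrow> x \<in> C \<and> x \<notin> f2_span (set ys)" for ys x
  have stepwise_Q: "stepwise Q xs \<longleftrightarrow> f2_independent xs \<and> set xs \<subseteq> C" for xs
    by (induction xs) (auto simp: Q_def)
  have ext: "finite {x. Q ys x} \<and> card {x. Q ys x} = card C - 2 ^ length ys"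
    if "stepwise Q ys" for ys
  proof -
    have ys: "f2_independent ys" "set ys \<subseteq> C" using that stepwise_Q by auto
    then have "f2_span (set ys) \<subseteq> C" using assms(2) f2_span_subset by blast
    moreover have "{x. Q ys x} = C - f2_span (set ys)" by (auto simp: Q_def)
    ultimately show ?thesis
      using assms(1) card_f2_span_independent[OF ys(1)]
      by (simp add: card_Diff_subset finite_f2_span)
  qed
  have "finite {xs. length xs = k \<and> stepwise Q xs} \<and>
    card {xs. length xs = k \<and> stepwise Q xs} = (\<Prod>j<k. card C - 2 ^ j)"
    by (rule card_stepwise_lists) (simp add: ext)
  then show "finite {xs. length xs = k \<and> f2_independent xs \<and> set xs \<subseteq> C}"
    "card {xs. length xs = k \<and> f2_independent xs \<and> set xs \<subseteq> C} = (\<Prod>j<k. card C - 2 ^ j)"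
    by (simp_all add: stepwise_Q)
qed

lemma double_card_kernel:
  fixes f :: "'a :: ab_group_add_char2 \<Rightarrow> 'b :: ab_group_add_char2"
  assumes "finite A" "add_closed A"
    and additive: "\<And>x y. x \<in> A \<Longrightarrow> y \<in> A \<Longrightarrow> f (x + y) = f x + f y"
    and two_values: "f ` A \<subseteq> {0, c}"
  shows "2 * card {x \<in> A. f x = 0} = (if \<forall>x\<in>A. f x = 0 then 2 * card A else card A)"
proof (cases "\<forall>x\<in>A. f x = 0")
  case True
  then have "{x \<in> A. f x = 0} = A" by blast
  then show ?thesis using True by simp
next
  case False
  then obtain a where a: "a \<in> A" "f a = c" "c \<noteq> 0" using two_values by blast
  let ?K = "{x \<in> A. f x = 0}" and ?K' = "{x \<in> A. f x \<noteq> 0}"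
  have "bij_betw (\<lambda>x. x + a) ?K ?K'"
    by (rule bij_betw_byWitness[where f' = "\<lambda>x. x + a"])
      (use assms a in \<open>auto simp: add_closed_def\<close>)
  then have "card ?K = card ?K'" by (rule bij_betw_same_card)
  moreover have "card A = card ?K + card ?K'"
    using assms(1) by (subst card_Un_disjoint[symmetric]) (auto intro: arg_cong[where f = card])
  ultimately show ?thesis unfolding if_not_P[OF False] by simp
qed

lemma card_filter_eq_sum: "finite A \<Longrightarrow> card {x \<in> A. P x} = (\<Sum>x\<in>A. if P x then 1 else 0)"
  by (simp add: sum.If_cases Int_def)

lemma sum_if_double:
  assumes "finite A"
  shows "(\<Sum>x\<in>A. if P x then 2 * m else m) = (card A + card {x \<in> A. P x}) * (m :: nat)"
proof -
  have "(\<Sum>x\<in>A. if P x then 2 * m else m) = (\<Sum>x\<in>A. m + (if P x then m else 0))"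
    by (rule sum.cong) auto
  also have "\<dots> = card A * m + card {x \<in> A. P x} * m"
    using assms by (simp add: sum.distrib flip: sum.inter_filter)
  finally show ?thesis by (simp add: algebra_simps)
qed

lemma card_by_fibers:
  assumes "finite A" "finite B" "f ` A \<subseteq> B" "\<And>b. b \<in> B \<Longrightarrow> card {a \<in> A. f a = b} = m"
  shows "card A = card B * m"
proof -
  have "card A = (\<Sum>b\<in>B. card {a \<in> A. f a = b})"
    unfolding card_eq_sum by (rule sum.group[symmetric, OF assms(1-3)])
  then show ?thesis using assms(4) by simp
qed

lemma mult_pow2_eq_pow2:
  assumes "(a :: nat) * 2 ^ b = 2 ^ c"
  shows "a = 2 ^ (c - b)"
proof -
  have "a \<noteq> 0" using assms by (intro notI) simp
  then have "(2 :: nat) ^ b \<le> 2 ^ c" using assms[symmetric] by simp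
  then have "(2 :: nat) ^ c = 2 ^ (c - b) * 2 ^ b" by (simp flip: power_add)
  then show ?thesis using assms by simp
qed

section \<open>The trace form on F4^n\<close>

definition f4_trace_form :: "f4 \<Rightarrow> f4 \<Rightarrow> f4" where
  "f4_trace_form a b = f4_mult a (f4_conj b) + f4_mult (f4_conj a) b"

lemma f4_trace_form_add_right: "f4_trace_form a (b + c) = f4_trace_form a b + f4_trace_form a c"
  unfolding f4_trace_form_def plus_f4_def f4_conj_def by (cases a; cases b; cases c) auto

lemma f4_trace_form_commute: "f4_trace_form a b = f4_trace_form b a"
  unfolding f4_trace_form_def plus_f4_def f4_conj_def by (cases a; cases b) auto

lemma f4_trace_form_self: "f4_trace_form a a = 0"
  unfolding f4_trace_form_def plus_f4_def f4_conj_def zero_f4_def by (cases a) auto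

lemma f4_trace_form_zero_left: "f4_trace_form 0 b = 0"
  unfolding f4_trace_form_def plus_f4_def f4_conj_def zero_f4_def by (cases b) auto

lemma f4_trace_form_in_F2: "f4_trace_form a b \<in> {0, One4}"
  unfolding f4_trace_form_def plus_f4_def f4_conj_def zero_f4_def by (cases a; cases b) auto

lemma f4_trace_form_nondegenerate: "b \<noteq> 0 \<Longrightarrow> \<exists>a. f4_trace_form a b \<noteq> 0"
  unfolding f4_trace_form_def plus_f4_def f4_conj_def zero_f4_def
  by (cases b) (auto intro: exI[of _ W4] exI[of _ One4])

type_synonym vec = "nat \<Rightarrow> f4"

lemma tr_ip_eq_sum: "tr_ip n u w = (\<Sum>i<n. f4_trace_form (u i) (w i))"
  unfolding tr_ip_def f4_trace_form_def by simp

lemma tr_ip_add_right: "tr_ip n u (w + z) = tr_ip n u w + tr_ip n u z"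
  unfolding tr_ip_eq_sum by (simp add: f4_trace_form_add_right sum.distrib)

lemma tr_ip_commute: "tr_ip n u w = tr_ip n w u"
  unfolding tr_ip_eq_sum by (simp add: f4_trace_form_commute)

lemma tr_ip_add_left: "tr_ip n (w + z) u = tr_ip n w u + tr_ip n z u"
  by (metis tr_ip_commute tr_ip_add_right)

lemma tr_ip_self [simp]: "tr_ip n u u = 0"
  unfolding tr_ip_eq_sum by (simp add: f4_trace_form_self)

lemma tr_ip_zero_left [simp]: "tr_ip n 0 u = 0"
  unfolding tr_ip_eq_sum by (simp add: f4_trace_form_zero_left)

lemma tr_ip_zero_right [simp]: "tr_ip n u 0 = 0"
  by (metis tr_ip_commute tr_ip_zero_left)

lemma tr_ip_in_F2: "tr_ip n u w \<in> {0, One4}"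
  unfolding tr_ip_eq_sum
proof (induction n)
  case (Suc n)
  then show ?case using f4_trace_form_in_F2[of "u n" "w n"]
    by (auto simp: plus_f4_def zero_f4_def)
qed (simp add: zero_f4_def)

lemma tr_ip_nondegenerate:
  assumes "s \<in> vecs n" "s \<noteq> 0"
  obtains c where "c \<in> vecs n" "tr_ip n c s \<noteq> 0"
proof -
  obtain i where i: "s i \<noteq> 0" using assms(2) by (auto simp: fun_eq_iff)
  then have "i < n" using assms(1) unfolding vecs_def by (metis (mono_tags) mem_Collect_eq not_le)
  obtain a where a: "f4_trace_form a (s i) \<noteq> 0" using f4_trace_form_nondegenerate[OF i] by blast
  define c where "c j = (if j = i then a else 0)" for j
  have "tr_ip n c s = (\<Sum>j<n. if j = i then f4_trace_form a (s i) else 0)"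
    unfolding tr_ip_eq_sum c_def by (rule sum.cong) (simp_all add: f4_trace_form_zero_left)
  then have "tr_ip n c s \<noteq> 0" using \<open>i < n\<close> a by simp
  moreover have "c \<in> vecs n" using \<open>i < n\<close> by (simp add: vecs_def c_def)
  ultimately show thesis using that by blast
qed

lemma add_closed_vecs: "add_closed (vecs n)"
  unfolding add_closed_def vecs_def by simp

lemma card_vecs: "finite (vecs n) \<and> card (vecs n) = 4 ^ n"
proof (induction n)
  case 0
  have "vecs 0 = {0}" unfolding vecs_def by (auto simp: fun_eq_iff)
  then show ?case by simp
next
  case (Suc n)
  have UNIV_f4: "(UNIV :: f4 set) = {Zero4, One4, W4, Wsq4}" using f4.exhaust by auto
  have "vecs (Suc n) = (\<lambda>(x, a). x(n := a)) ` (vecs n \<times> UNIV)"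
  proof (intro equalityI subsetI)
    fix y assume "y \<in> vecs (Suc n)"
    then have "y(n := 0) \<in> vecs n" by (auto simp: vecs_def)
    then show "y \<in> (\<lambda>(x, a). x(n := a)) ` (vecs n \<times> UNIV)"
      by (intro image_eqI[where x = "(y(n := 0), y n)"]) auto
  qed (auto simp: vecs_def)
  moreover have "inj_on (\<lambda>(x, a). x(n := a)) (vecs n \<times> UNIV)"
  proof (rule inj_onI, clarify)
    fix x a y b assume xy: "x \<in> vecs n" "y \<in> vecs n" "x(n := a) = y(n := b)"
    have "x i = y i" for i
      using fun_cong[OF xy(3), of i] xy(1,2) unfolding vecs_def by (cases "i = n") auto
    then show "x = y \<and> a = b" using fun_cong[OF xy(3), of n] by auto
  qed
  moreover have "finite (UNIV :: f4 set)" "card (UNIV :: f4 set) = 4" unfolding UNIV_f4 by simp_all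
  ultimately show ?case using Suc by (simp add: card_image card_cartesian_product)
qed

lemma finite_vecs: "finite (vecs n)"
  using card_vecs by blast

lemma dual_code_subset_vecs: "dual_code n S \<subseteq> vecs n"
  unfolding dual_code_def by blast

lemma dual_code_antimono: "S \<subseteq> S' \<Longrightarrow> dual_code n S' \<subseteq> dual_code n S"
  unfolding dual_code_def by blast

lemma add_closed_dual_code: "add_closed (dual_code n S)"
  using add_closed_vecs by (auto simp: add_closed_def dual_code_def tr_ip_add_left)

lemma double_card_orthogonal_vecs:
  assumes "s \<in> vecs n"
  shows "2 * card {c \<in> vecs n. tr_ip n c s = 0} = (if s = 0 then 2 * card (vecs n) else card (vecs n))"
proof -
  have "(\<forall>c\<in>vecs n. tr_ip n c s = 0) \<longleftrightarrow> s = 0"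
    using assms tr_ip_nondegenerate[of s n] by auto
  moreover have "2 * card {c \<in> vecs n. tr_ip n c s = 0}
      = (if \<forall>c\<in>vecs n. tr_ip n c s = 0 then 2 * card (vecs n) else card (vecs n))"
    by (rule double_card_kernel[OF finite_vecs add_closed_vecs, where c = One4])
      (use tr_ip_in_F2 in \<open>auto simp: tr_ip_add_left\<close>)
  ultimately show ?thesis by simp
qed

lemma double_card_orthogonal:
  assumes "S \<subseteq> vecs n" "add_closed S" "c \<in> vecs n"
  shows "2 * card {s \<in> S. tr_ip n c s = 0} = (if c \<in> dual_code n S then 2 * card S else card S)"
proof -
  have "finite S" using assms(1) finite_vecs finite_subset by blast
  then have "2 * card {s \<in> S. tr_ip n c s = 0}
      = (if \<forall>s\<in>S. tr_ip n c s = 0 then 2 * card S else card S)"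
    by (rule double_card_kernel[OF _ assms(2), where c = One4])
      (use tr_ip_in_F2 in \<open>auto simp: tr_ip_add_right\<close>)
  then show ?thesis using assms(3) by (simp add: dual_code_def)
qed

text \<open>Double counting of the pairs (c, s) in vecs n \<times> S with tr_ip n c s = 0.\<close>
lemma card_dual_code:
  assumes "S \<subseteq> vecs n" "add_closed S"
  shows "card (dual_code n S) * card S = 4 ^ n"
proof -
  let ?V = "vecs n" and ?P = "dual_code n S"
  have fin: "finite ?V" "finite S" using finite_vecs assms(1) finite_subset by blast+
  have "2 * (\<Sum>s\<in>S. card {c \<in> ?V. tr_ip n c s = 0})
      = (\<Sum>s\<in>S. if s = 0 then 2 * card ?V else card ?V)"
    unfolding sum_distrib_left
    by (intro sum.cong refl double_card_orthogonal_vecs) (use assms(1) in blast)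
  moreover have "{s \<in> S. s = 0} = {0}" using assms(2) by (auto simp: add_closed_def)
  ultimately have by_s: "2 * (\<Sum>s\<in>S. card {c \<in> ?V. tr_ip n c s = 0}) = (card S + 1) * card ?V"
    using sum_if_double[OF fin(2), of "\<lambda>s. s = 0" "card ?V"] by simp
  have "{c \<in> ?V. c \<in> ?P} = ?P" using dual_code_subset_vecs by blast
  then have by_c: "2 * (\<Sum>c\<in>?V. card {s \<in> S. tr_ip n c s = 0}) = (card ?V + card ?P) * card S"
    using double_card_orthogonal[OF assms] sum_if_double[OF fin(1), of "\<lambda>c. c \<in> ?P" "card S"]
    by (simp add: sum_distrib_left)
  have "(\<Sum>s\<in>S. card {c \<in> ?V. tr_ip n c s = 0}) = (\<Sum>c\<in>?V. card {s \<in> S. tr_ip n c s = 0})"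
    using fin by (simp add: card_filter_eq_sum sum.swap[of _ S])
  then show ?thesis using by_s by_c card_vecs[of n] by (simp add: algebra_simps)
qed

lemma additive_code_iff: "additive_code n C \<longleftrightarrow> C \<subseteq> vecs n \<and> add_closed C"
  unfolding additive_code_def add_closed_def by blast

lemma self_orthogonal_subset_vecs: "self_orthogonal n S \<Longrightarrow> S \<subseteq> vecs n"
  unfolding self_orthogonal_def using dual_code_subset_vecs by blast

lemma self_orthogonal_subset: "self_orthogonal n C \<Longrightarrow> X \<subseteq> C \<Longrightarrow> self_orthogonal n X"
  unfolding self_orthogonal_def using dual_code_antimono by blast

lemma self_orthogonal_insert:
  "self_orthogonal n (insert x Y) \<longleftrightarrow> self_orthogonal n Y \<and> x \<in> dual_code n Y"
  unfolding self_orthogonal_def dual_code_def by (auto simp: tr_ip_commute[of n x])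

lemma dual_code_f2_span: "dual_code n (f2_span Y) = dual_code n Y"
proof
  show "dual_code n (f2_span Y) \<subseteq> dual_code n Y"
    by (rule dual_code_antimono[OF f2_span_superset])
  show "dual_code n Y \<subseteq> dual_code n (f2_span Y)"
  proof
    fix u assume u: "u \<in> dual_code n Y"
    have "add_closed {c. tr_ip n u c = 0}" by (simp add: add_closed_def tr_ip_add_right)
    then have "f2_span Y \<subseteq> {c. tr_ip n u c = 0}"
      using u by (intro f2_span_subset) (auto simp: dual_code_def)
    then show "u \<in> dual_code n (f2_span Y)" using u by (auto simp: dual_code_def)
  qed
qed

lemma self_orthogonal_f2_span: "self_orthogonal n (f2_span Y) \<longleftrightarrow> self_orthogonal n Y"
proof
  assume "self_orthogonal n (f2_span Y)"
  then show "self_orthogonal n Y" using f2_span_superset self_orthogonal_subset by blast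
next
  assume "self_orthogonal n Y"
  then have "Y \<subseteq> dual_code n (f2_span Y)" by (simp add: self_orthogonal_def dual_code_f2_span)
  then show "self_orthogonal n (f2_span Y)"
    unfolding self_orthogonal_def by (rule f2_span_subset[OF _ add_closed_dual_code])
qed

lemma card_dual_code_diff:
  assumes "self_orthogonal n S" "add_closed S" "card S = 2 ^ m"
  shows "card (dual_code n S - S) = 2 ^ (2 * n - m) - 2 ^ m"
proof -
  have "S \<subseteq> vecs n" using assms(1) by (rule self_orthogonal_subset_vecs)
  then have "card (dual_code n S) * 2 ^ m = 2 ^ (2 * n)"
    using card_dual_code[OF _ assms(2)] assms(3) by (simp add: power_mult)
  then have "card (dual_code n S) = 2 ^ (2 * n - m)" by (rule mult_pow2_eq_pow2)
  moreover have "finite S" using \<open>S \<subseteq> vecs n\<close> finite_vecs finite_subset by blast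
  ultimately show ?thesis
    using assms(1,3) by (simp add: card_Diff_subset self_orthogonal_def)
qed

section \<open>Isotropic chains and the codes counted by tau_k\<close>

definition isotropic_step :: "nat \<Rightarrow> vec \<Rightarrow> vec list \<Rightarrow> vec \<Rightarrow> bool" where
  "isotropic_step n v ys x \<longleftrightarrow>
    x \<in> dual_code n (f2_span (set (v # ys))) - f2_span (set (v # ys))"

lemma stepwise_isotropic_step_iff:
  assumes "v \<in> vecs n" "v \<noteq> 0"
  shows "stepwise (isotropic_step n v) xs \<longleftrightarrow>
    f2_independent (v # xs) \<and> self_orthogonal n (set (v # xs))"
proof (induction xs)
  case Nil
  then show ?case using assms by (simp add: self_orthogonal_def dual_code_def)
next
  case (Cons x xs)
  let ?Y = "set (v # xs)"
  have "stepwise (isotropic_step n v) (x # xs) \<longleftrightarrow>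
      (f2_independent (v # xs) \<and> self_orthogonal n ?Y) \<and> x \<in> dual_code n ?Y \<and> x \<notin> f2_span ?Y"
    using Cons.IH by (simp add: isotropic_step_def[of n v xs x] dual_code_f2_span)
  also have "\<dots> \<longleftrightarrow> f2_independent (x # v # xs) \<and> self_orthogonal n (insert x ?Y)"
    by (subst f2_independent_simps(2)[of x]) (auto simp: self_orthogonal_insert)
  also have "\<dots> \<longleftrightarrow> f2_independent (v # x # xs) \<and> self_orthogonal n (set (v # x # xs))"
    by (simp only: f2_independent_Cons_swap[of x v]) (simp add: insert_commute)
  finally show ?case .
qed

lemma card_isotropic_chains:
  assumes "v \<in> vecs n" "v \<noteq> 0"
  shows "finite {xs. length xs = k \<and> stepwise (isotropic_step n v) xs} \<and>
    card {xs. length xs = k \<and> stepwise (isotropic_step n v) xs}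
      = (\<Prod>j<k. 2 ^ (2 * n - Suc j) - 2 ^ Suc j)"
proof (rule card_stepwise_lists)
  fix ys assume "stepwise (isotropic_step n v) ys"
  then have ys: "f2_independent (v # ys)" "self_orthogonal n (set (v # ys))"
    using stepwise_isotropic_step_iff[OF assms] by blast+
  let ?S = "f2_span (set (v # ys))"
  have "self_orthogonal n ?S" using ys(2) by (simp only: self_orthogonal_f2_span)
  moreover have "card ?S = 2 ^ Suc (length ys)" using card_f2_span_independent[OF ys(1)] by simp
  ultimately have "card (dual_code n ?S - ?S) = 2 ^ (2 * n - Suc (length ys)) - 2 ^ Suc (length ys)"
    by (intro card_dual_code_diff) (simp_all add: add_closed_f2_span)
  moreover have "{x. isotropic_step n v ys x} = dual_code n ?S - ?S"
    by (auto simp: isotropic_step_def)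
  moreover have "finite (dual_code n ?S)"
    using dual_code_subset_vecs finite_vecs finite_subset by blast
  ultimately show "finite {x. isotropic_step n v ys x} \<and>
      card {x. isotropic_step n v ys x} = 2 ^ (2 * n - Suc (length ys)) - 2 ^ Suc (length ys)"
    by simp
qed

definition tau_codes :: "nat \<Rightarrow> nat \<Rightarrow> vec \<Rightarrow> vec set set" where
  "tau_codes n k v = {C. additive_code n C \<and> self_orthogonal n C \<and> f2_dim C k \<and>
                         v \<in> dual_code n C - C}"

lemma finite_tau_codes: "finite (tau_codes n k v)"
proof (rule finite_subset)
  show "tau_codes n k v \<subseteq> Pow (vecs n)" by (auto simp: tau_codes_def additive_code_def)
qed (simp add: finite_vecs)

lemma f2_span_isotropic_chain_in_tau_codes:
  assumes "v \<in> vecs n" "v \<noteq> 0" "stepwise (isotropic_step n v) xs"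
  shows "f2_span (set xs) \<in> tau_codes n (length xs) v"
proof -
  let ?X = "set xs"
  have indep: "f2_independent xs" "v \<notin> f2_span ?X"
    and so: "self_orthogonal n ?X" "v \<in> dual_code n ?X"
    using assms stepwise_isotropic_step_iff[of v n xs] by (simp_all add: self_orthogonal_insert)
  have "self_orthogonal n (f2_span ?X)" using so(1) by (simp only: self_orthogonal_f2_span)
  moreover from this have "additive_code n (f2_span ?X)"
    by (simp add: additive_code_iff self_orthogonal_subset_vecs add_closed_f2_span)
  ultimately show ?thesis
    using indep so(2) f2_dim_f2_span by (simp add: tau_codes_def dual_code_f2_span)
qed

lemma isotropic_chain_spans_iff:
  assumes "v \<in> vecs n" "v \<noteq> 0" "C \<in> tau_codes n k v" "length xs = k"
  shows "stepwise (isotropic_step n v) xs \<and> f2_span (set xs) = C \<longleftrightarrow>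
    f2_independent xs \<and> set xs \<subseteq> C"
proof
  assume "stepwise (isotropic_step n v) xs \<and> f2_span (set xs) = C"
  then show "f2_independent xs \<and> set xs \<subseteq> C"
    using stepwise_isotropic_step_iff[OF assms(1,2)] f2_span_superset by auto
next
  assume xs: "f2_independent xs \<and> set xs \<subseteq> C"
  have C: "additive_code n C" "self_orthogonal n C" "f2_dim C k" "v \<in> dual_code n C" "v \<notin> C"
    using assms(3) by (auto simp: tau_codes_def)
  have "f2_span (set xs) \<subseteq> C" using xs C(1) by (intro f2_span_subset) (auto simp: additive_code_iff)
  moreover have "card (f2_span (set xs)) = card C"
    using xs assms(4) card_f2_span_independent[of xs] card_f2_dim(2)[OF C(3)] by auto
  ultimately have span: "f2_span (set xs) = C"
    using card_subset_eq card_f2_dim(1)[OF C(3)] by blast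
  have "self_orthogonal n (set (v # xs))"
    using xs C(2,4) dual_code_antimono[of "set xs" C n]
    by (auto simp: self_orthogonal_insert intro: self_orthogonal_subset)
  then show "stepwise (isotropic_step n v) xs \<and> f2_span (set xs) = C"
    using xs span C(5) stepwise_isotropic_step_iff[OF assms(1,2)] by simp
qed

lemma card_tau_codes_mult:
  assumes "v \<in> vecs n" "v \<noteq> 0"
  shows "card (tau_codes n k v) * (\<Prod>j<k. 2 ^ k - 2 ^ j) = (\<Prod>j<k. 2 ^ (2 * n - Suc j) - 2 ^ Suc j)"
proof -
  let ?L = "{xs. length xs = k \<and> stepwise (isotropic_step n v) xs}"
  have "card {xs \<in> ?L. f2_span (set xs) = C} = (\<Prod>j<k. 2 ^ k - 2 ^ j)"
    if C: "C \<in> tau_codes n k v" for C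
  proof -
    have "f2_dim C k" "additive_code n C" using C by (simp_all add: tau_codes_def)
    then have "finite C" "card C = 2 ^ k" "add_closed C"
      using card_f2_dim additive_code_iff by blast+
    moreover have "{xs \<in> ?L. f2_span (set xs) = C}
        = {xs. length xs = k \<and> f2_independent xs \<and> set xs \<subseteq> C}"
      using isotropic_chain_spans_iff[OF assms C] by blast
    ultimately show ?thesis using card_ordered_f2_bases(2)[of C k] by simp
  qed
  then have "card ?L = card (tau_codes n k v) * (\<Prod>j<k. 2 ^ k - 2 ^ j)"
    using card_isotropic_chains[OF assms] f2_span_isotropic_chain_in_tau_codes[OF assms]
    by (intro card_by_fibers) (auto simp: finite_tau_codes)
  then show ?thesis using card_isotropic_chains[OF assms] by simp
qed

lemma prod_pow2_minus_pow2:
  "(\<Prod>j<k. (2 :: nat) ^ k - 2 ^ j) = (\<Prod>j<k. 2 ^ j) * (\<Prod>i=1..k. 2 ^ i - 1)"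
proof -
  have "(\<Prod>j<k. (2 :: nat) ^ k - 2 ^ j) = (\<Prod>j<k. 2 ^ j * (2 ^ (k - j) - 1))"
  proof (rule prod.cong[OF refl])
    fix j assume "j \<in> {..<k}"
    then have "(2 :: nat) ^ k = 2 ^ j * 2 ^ (k - j)" by (simp flip: power_add)
    then show "(2 :: nat) ^ k - 2 ^ j = 2 ^ j * (2 ^ (k - j) - 1)" by (simp add: diff_mult_distrib2)
  qed
  also have "\<dots> = (\<Prod>j<k. 2 ^ j) * (\<Prod>j<k. 2 ^ Suc (k - Suc j) - 1)"
    by (simp add: prod.distrib Suc_diff_Suc)
  also have "(\<Prod>j<k. (2 :: nat) ^ Suc (k - Suc j) - 1) = (\<Prod>j<k. 2 ^ Suc j - 1)"
    by (rule prod.nat_diff_reindex[where g = "\<lambda>i. (2 :: nat) ^ Suc i - 1"])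
  also have "\<dots> = (\<Prod>i=1..k. 2 ^ i - 1)" by (simp add: prod.atLeast1_atMost_eq)
  finally show ?thesis .
qed

lemma prod_pow2_minus_pow2_Suc:
  assumes "k \<le> n"
  shows "(\<Prod>j<k. (2 :: nat) ^ (2 * n - Suc j) - 2 ^ Suc j)
    = 2 ^ k * (\<Prod>j<k. 2 ^ j) * (\<Prod>i=1..k. 2 ^ (2 * (n - i)) - 1)"
proof -
  have "(\<Prod>j<k. (2 :: nat) ^ (2 * n - Suc j) - 2 ^ Suc j)
      = (\<Prod>j<k. 2 * 2 ^ j * (2 ^ (2 * (n - Suc j)) - 1))"
  proof (rule prod.cong[OF refl])
    fix j assume "j \<in> {..<k}"
    then have "2 * n - Suc j = Suc j + 2 * (n - Suc j)" using assms by auto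
    then have "(2 :: nat) ^ (2 * n - Suc j) = 2 ^ Suc j * 2 ^ (2 * (n - Suc j))"
      by (simp flip: power_add)
    then show "(2 :: nat) ^ (2 * n - Suc j) - 2 ^ Suc j = 2 * 2 ^ j * (2 ^ (2 * (n - Suc j)) - 1)"
      by (simp add: diff_mult_distrib2)
  qed
  also have "\<dots> = 2 ^ k * (\<Prod>j<k. 2 ^ j) * (\<Prod>i=1..k. 2 ^ (2 * (n - i)) - 1)"
    by (simp add: prod.distrib prod.atLeast1_atMost_eq)
  finally show ?thesis .
qed

lemma card_tau_codes_mult_prod:
  assumes "v \<in> vecs n" "v \<noteq> 0" "k \<le> n"
  shows "card (tau_codes n k v) * (\<Prod>i=1..k. 2 ^ i - 1) = 2 ^ k * (\<Prod>i=1..k. 2 ^ (2 * (n - i)) - 1)"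
proof -
  have "card (tau_codes n k v) * (\<Prod>j<k. 2 ^ j) * (\<Prod>i=1..k. 2 ^ i - 1)
      = 2 ^ k * (\<Prod>j<k. 2 ^ j) * (\<Prod>i=1..k. 2 ^ (2 * (n - i)) - 1)"
    using card_tau_codes_mult[OF assms(1,2), of k]
    unfolding prod_pow2_minus_pow2 prod_pow2_minus_pow2_Suc[OF assms(3)] by (simp only: mult.assoc)
  then show ?thesis by (simp add: mult.commute mult.left_commute)
qed

lemma real_eq_pow2_times_prod_quotient:
  assumes "(t :: nat) * (\<Prod>i=1..k. 2 ^ i - 1) = 2 ^ k * (\<Prod>i=1..k. 2 ^ (2 * (n - i)) - 1)"
  shows "real t = 2 ^ k * (\<Prod>i=1..k. (2 ^ (2 * (n - i)) - 1) / (2 ^ i - 1))"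
proof -
  have "real t * (\<Prod>i=1..k. 2 ^ i - 1) = 2 ^ k * (\<Prod>i=1..k. 2 ^ (2 * (n - i)) - 1)"
    using arg_cong[OF assms, where f = real] by (simp add: of_nat_prod of_nat_diff)
  moreover have "(2 :: real) ^ i \<noteq> 1" if "0 < i" for i
    using one_less_power[of "2 :: real" i] that by linarith
  then have "(\<Prod>i=1..k. 2 ^ i - 1 :: real) \<noteq> 0" by (auto simp: Suc_le_eq)
  ultimately show ?thesis by (simp add: prod_dividef eq_divide_eq)
qed

theorem lemmaA3:
  fixes n k :: nat and v :: "nat \<Rightarrow> f4"
  assumes "v \<in> vecs n" and "v \<noteq> 0" and "1 \<le> k" and "k \<le> n - 1"
  shows "real (card {C. additive_code n C \<and> self_orthogonal n C \<and> f2_dim C k \<and>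
                        v \<in> dual_code n C - C})
         = 2 ^ k * (\<Prod>i=1..k. (2 ^ (2 * (n - i)) - 1) / (2 ^ i - 1))"
proof -
  have "k \<le> n" using assms(4) by arith
  with assms(1,2) have "card (tau_codes n k v) * (\<Prod>i=1..k. 2 ^ i - 1)
      = 2 ^ k * (\<Prod>i=1..k. 2 ^ (2 * (n - i)) - 1)"
    by (rule card_tau_codes_mult_prod)
  then show ?thesis unfolding tau_codes_def by (rule real_eq_pow2_times_prod_quotient)
qed

end
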